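(* For all integers $t\geq 1$ and $N\geq 0$: $\mathfrak{m}_{\mathrm{odd}}(-2,t;8N+r)\equiv 0\pmod 4$ for $r\in\{3,6\}$; $\mathfrak{m}_{\mathrm{odd}}(-2,t;9N+r)\equiv 0\pmod 4$ for $r\in\{3,6\}$; $\mathfrak{m}_{\mathrm{odd}}(-2,t;8N+7)\equiv 0\pmod 8$.
   Context: For $a\in\{-2,-1,0,1,2\}$ and integer $t\geq0$, the integers $\mathfrak{m}_{\mathrm{odd}}(a,t;n)$ are defined by $\sum_{n\geq0}\mathfrak{m}_{\mathrm{odd}}(a,t;n)q^n=\sum\prod_{k=1}^t\frac{q^{n_k}}{1+aq^{n_k}+q^{2n_k}}$, the sum running over all $t$-tuples of odd positive integers $n_1<n_2<\cdots<n_t$ (for $t=0$ the series is $1$). *)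

theory Defs
  imports "HOL-Computational_Algebra.Formal_Power_Series"
begin

definition modd_factor :: "int \<Rightarrow> nat \<Rightarrow> rat fps" where
  "modd_factor a k = fps_X ^ k * inverse (1 + fps_const (of_int a) * fps_X ^ k + fps_X ^ (2 * k))"

text \<open>Coefficient of q^n in the sum over t-element sets {n_1 < ... < n_t} of odd positive
  integers of the product of the factors.  Sets containing an odd number larger than n
  contribute only to coefficients of degree larger than n (each factor is divisible by q^(n_k)),
  so restricting to odd numbers at most n gives exactly the n-th coefficient.\<close>
definition modd :: "int \<Rightarrow> nat \<Rightarrow> nat \<Rightarrow> rat" where
  "modd a t n = fps_nth
     (\<Sum>S \<in> {S. S \<subseteq> {k. odd k \<and> k \<le> n} \<and> card S = t}. \<Prod>k\<in>S. modd_factor a k) n"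

end

(*
  Let D_K = prod_{k < 2K odd} (1 - q^k)^2 and let W_K(t) be D_K times the t-th elementary
  symmetric function of the factors q^k / (1 - q^k)^2, k = 1, 3, ..., 2K - 1; that symmetric
  function agrees with the generating function of modd(-2, t; _) below degree 2K + 1.
  W_K(t) satisfies a two-term recurrence in K, and so its binomial transform
  sum_t C(2t, t + j) W_K(t) satisfies the same recurrence as q^(j^2) [2K, K + j]_(q^2), a
  Gaussian binomial coefficient in base q^2; hence the two agree.  For K <= n <= 2K the latter
  is q^(j^2) / (q^2; q^2)_n modulo q^(n+1).  Inverting the unitriangular binomial transform
  over the integers, W_K(t) is congruent to B / (q^2; q^2)_n with B an integral combination of
  the q^(j^2), and since central binomial coefficients are even, D_K = W_K(0) is congruent to
  (1 - 2S) / (q^2; q^2)_n with S of the same kind.  So the generating function is congruent to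
  B / (1 - 2S), whose n-th coefficient is B_n + 2 (SB)_n + 4 (S^2 B)_n modulo 8, the three terms
  vanishing unless n is a sum of one, two, three squares respectively.  Numbers congruent to
  3 or 6 modulo 8 or 9 are not sums of two squares, those congruent to 7 modulo 8 not sums of
  three squares.
*)

theory Submission
  imports Defs
begin

unbundle fps_syntax

section \<open>Congruences of power series modulo powers of X\<close>

definition fps_cong :: "nat \<Rightarrow> 'a::comm_ring_1 fps \<Rightarrow> 'a fps \<Rightarrow> bool" where
  "fps_cong L f g \<longleftrightarrow> fps_X ^ L dvd f - g"

lemma fps_cong_refl [simp]: "fps_cong L f f"
  by (simp add: fps_cong_def)

lemma fps_cong_sym: "fps_cong L f g \<Longrightarrow> fps_cong L g f"
  unfolding fps_cong_def by (subst dvd_minus_iff[symmetric]) simp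

lemma fps_cong_trans [trans]: "fps_cong L f g \<Longrightarrow> fps_cong L g h \<Longrightarrow> fps_cong L f h"
  unfolding fps_cong_def by (drule (1) dvd_add) simp

lemma fps_cong_add: "fps_cong L f g \<Longrightarrow> fps_cong L f' g' \<Longrightarrow> fps_cong L (f + f') (g + g')"
  unfolding fps_cong_def by (drule (1) dvd_add) (simp add: algebra_simps)

lemma fps_cong_diff: "fps_cong L f g \<Longrightarrow> fps_cong L f' g' \<Longrightarrow> fps_cong L (f - f') (g - g')"
  unfolding fps_cong_def by (drule (1) dvd_diff) (simp add: algebra_simps)

lemma fps_cong_mult:
  assumes "fps_cong L f g" "fps_cong L f' g'"
  shows "fps_cong L (f * f') (g * g')"
proof -
  have "f * f' - g * g' = f * (f' - g') + (f - g) * g'"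
    by (simp add: algebra_simps)
  then show ?thesis
    using assms unfolding fps_cong_def by (simp add: dvd_add dvd_mult dvd_mult2)
qed

lemma fps_cong_nth: "fps_cong L f g \<Longrightarrow> i < L \<Longrightarrow> f $ i = g $ i"
proof -
  assume "fps_cong L f g" "i < L"
  then obtain h where "f - g = fps_X ^ L * h"
    unfolding fps_cong_def by (elim dvdE)
  then have "(f - g) $ i = 0"
    using \<open>i < L\<close> by (simp add: fps_X_power_mult_nth)
  then show ?thesis
    by simp
qed

lemma fps_cong_mono: "fps_cong L f g \<Longrightarrow> L' \<le> L \<Longrightarrow> fps_cong L' f g"
  unfolding fps_cong_def using le_imp_power_dvd dvd_trans by blast

lemma fps_cong_mult_X_power:
  "fps_cong L f g \<Longrightarrow> fps_cong (L + k) (fps_X ^ k * f) (fps_X ^ k * g)"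
proof -
  assume "fps_cong L f g"
  then have "fps_X ^ k * fps_X ^ L dvd fps_X ^ k * (f - g)"
    unfolding fps_cong_def by (rule mult_dvd_mono[OF dvd_refl])
  then show ?thesis
    unfolding fps_cong_def by (simp add: power_add right_diff_distrib mult.commute left_diff_distrib)
qed

lemma fps_cong_0_X_power: "L \<le> k \<Longrightarrow> fps_cong L 0 (fps_X ^ k * f)"
  unfolding fps_cong_def by (simp add: dvd_mult2 le_imp_power_dvd)

lemma fps_cong_inverse:
  fixes f g :: "'a::field fps"
  assumes "fps_cong L f g" "f $ 0 \<noteq> 0" "g $ 0 \<noteq> 0"
  shows "fps_cong L (inverse f) (inverse g)"
proof -
  have "inverse f - inverse g = inverse f * inverse g * (g - f)"
    using assms(2,3) by (simp add: algebra_simps inverse_mult_eq_1 inverse_mult_eq_1')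
  moreover have "fps_X ^ L dvd g - f"
    using fps_cong_sym[OF assms(1)] by (simp add: fps_cong_def)
  ultimately show ?thesis
    unfolding fps_cong_def by simp
qed

lemma fps_cong_mult_cancel:
  fixes u :: "'a::field fps"
  assumes "fps_cong L (u * f) (u * g)" "u $ 0 \<noteq> 0"
  shows "fps_cong L f g"
proof -
  have "fps_cong L (inverse u * (u * f)) (inverse u * (u * g))"
    using assms(1) by (rule fps_cong_mult[OF fps_cong_refl])
  then show ?thesis
    using inverse_mult_eq_1[OF assms(2)] by (simp flip: mult.assoc)
qed

section \<open>Integral series supported on sums of squares\<close>

definition fps_integral :: "'a::comm_ring_1 fps \<Rightarrow> bool" where
  "fps_integral f \<longleftrightarrow> (\<forall>n. f $ n \<in> \<int>)"

lemma fps_integral_1: "fps_integral 1"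
  by (simp add: fps_integral_def fps_one_nth)

lemma fps_integral_numeral: "fps_integral (numeral k)"
  by (simp add: fps_integral_def fps_numeral_nth)

lemma fps_integral_X_power: "fps_integral (fps_X ^ k)"
  by (simp add: fps_integral_def)

lemma fps_integral_add: "fps_integral f \<Longrightarrow> fps_integral g \<Longrightarrow> fps_integral (f + g)"
  by (simp add: fps_integral_def)

lemma fps_integral_diff: "fps_integral f \<Longrightarrow> fps_integral g \<Longrightarrow> fps_integral (f - g)"
  by (simp add: fps_integral_def)

lemma fps_integral_mult: "fps_integral f \<Longrightarrow> fps_integral g \<Longrightarrow> fps_integral (f * g)"
  unfolding fps_integral_def fps_mult_nth by (auto intro!: Ints_sum Ints_mult)

lemma fps_integral_of_int_mult: "fps_integral f \<Longrightarrow> fps_integral (of_int c * f)"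
  by (simp add: fps_integral_def)

lemma fps_integral_inverse:
  fixes f :: "'a::field fps"
  assumes "fps_integral f" "f $ 0 = 1"
  shows "fps_integral (inverse f)"
  unfolding fps_integral_def
proof
  fix n show "inverse f $ n \<in> \<int>"
  proof (induction n rule: less_induct)
    case (less n)
    show ?case
    proof (cases n)
      case 0
      then show ?thesis
        using assms(2) by simp
    next
      case (Suc m)
      have "(inverse f * f) $ Suc m = 0"
        using assms(2) by (simp add: inverse_mult_eq_1)
      then have "(\<Sum>i=0..m. inverse f $ i * f $ (Suc m - i)) + inverse f $ Suc m = 0"
        using assms(2) by (simp add: fps_mult_nth sum.atLeast0_atMost_Suc)
      then have "inverse f $ Suc m = - (\<Sum>i=0..m. inverse f $ i * f $ (Suc m - i))"
        by (simp add: eq_neg_iff_add_eq_0 add.commute)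
      moreover have "(\<Sum>i=0..m. inverse f $ i * f $ (Suc m - i)) \<in> \<int>"
        using less Suc assms(1) unfolding fps_integral_def by (auto intro!: Ints_sum Ints_mult)
      ultimately show ?thesis
        using Suc by simp
    qed
  qed
qed

definition sum_of_squares :: "nat \<Rightarrow> nat \<Rightarrow> bool" where
  "sum_of_squares k n \<longleftrightarrow> (\<exists>xs. length xs = k \<and> n = (\<Sum>x\<leftarrow>xs. x ^ 2))"

lemma sum_of_squares_0: "sum_of_squares k 0"
  unfolding sum_of_squares_def by (rule exI[of _ "replicate k 0"]) (simp add: sum_list_replicate)

lemma sum_of_squares_square: "sum_of_squares 1 (a ^ 2)"
  unfolding sum_of_squares_def by (rule exI[of _ "[a]"]) simp

lemma sum_of_squares_add:
  "sum_of_squares k m \<Longrightarrow> sum_of_squares l n \<Longrightarrow> sum_of_squares (k + l) (m + n)"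
  unfolding sum_of_squares_def by (metis length_append map_append sum_list_append)

lemma sum_of_squares_mono: "sum_of_squares k n \<Longrightarrow> k \<le> l \<Longrightarrow> sum_of_squares l n"
  using sum_of_squares_add[OF _ sum_of_squares_0, of k n "l - k"] by simp

lemma sum_of_two_squares: "sum_of_squares 2 n \<Longrightarrow> \<exists>a b. n = a ^ 2 + b ^ 2"
  unfolding sum_of_squares_def numeral_2_eq_2 by (force simp: length_Suc_conv)

lemma sum_of_three_squares: "sum_of_squares 3 n \<Longrightarrow> \<exists>a b c. n = a ^ 2 + b ^ 2 + c ^ 2"
  unfolding sum_of_squares_def numeral_3_eq_3 by (force simp: length_Suc_conv add.assoc)

lemma square_mod_8: "(a::nat) ^ 2 mod 8 \<in> {0, 1, 4}"
proof -
  have "a mod 8 \<in> {..<8}"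
    by simp
  then have "(a mod 8) ^ 2 mod 8 \<in> {0, 1, 4}"
    by (auto simp: lessThan_nat_numeral)
  then show ?thesis
    by (simp add: power_mod)
qed

lemma square_mod_9: "(a::nat) ^ 2 mod 9 \<in> {0, 1, 4, 7}"
proof -
  have "a mod 9 \<in> {..<9}"
    by simp
  then have "(a mod 9) ^ 2 mod 9 \<in> {0, 1, 4, 7}"
    by (auto simp: lessThan_nat_numeral)
  then show ?thesis
    by (simp add: power_mod)
qed

lemma sum_of_two_squares_mod_8: "sum_of_squares 2 n \<Longrightarrow> n mod 8 \<notin> {3, 6, 7}"
proof -
  assume "sum_of_squares 2 n"
  then obtain a b where "n = a ^ 2 + b ^ 2"
    by (blast dest: sum_of_two_squares)
  then have "n mod 8 = (a ^ 2 mod 8 + b ^ 2 mod 8) mod 8"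
    by (simp add: mod_add_eq)
  then show ?thesis
    using square_mod_8[of a] square_mod_8[of b] by auto
qed

lemma sum_of_two_squares_mod_9: "sum_of_squares 2 n \<Longrightarrow> n mod 9 \<notin> {3, 6}"
proof -
  assume "sum_of_squares 2 n"
  then obtain a b where "n = a ^ 2 + b ^ 2"
    by (blast dest: sum_of_two_squares)
  then have "n mod 9 = (a ^ 2 mod 9 + b ^ 2 mod 9) mod 9"
    by (simp add: mod_add_eq)
  then show ?thesis
    using square_mod_9[of a] square_mod_9[of b] by auto
qed

lemma sum_of_three_squares_mod_8: "sum_of_squares 3 n \<Longrightarrow> n mod 8 \<noteq> 7"
proof -
  assume "sum_of_squares 3 n"
  then obtain a b c where "n = a ^ 2 + b ^ 2 + c ^ 2"
    by (blast dest: sum_of_three_squares)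
  then have "n mod 8 = ((a ^ 2 mod 8 + b ^ 2 mod 8) mod 8 + c ^ 2 mod 8) mod 8"
    by (simp add: mod_add_eq)
  then show ?thesis
    using square_mod_8[of a] square_mod_8[of b] square_mod_8[of c] by auto
qed

definition sos_supported :: "nat \<Rightarrow> 'a::comm_ring_1 fps \<Rightarrow> bool" where
  "sos_supported k f \<longleftrightarrow> (\<forall>n. f $ n \<noteq> 0 \<longrightarrow> sum_of_squares k n)"

lemma sos_supported_X_power_square: "sos_supported 1 (fps_X ^ (j ^ 2))"
  using sum_of_squares_square[of j] by (simp add: sos_supported_def)

lemma sos_supported_add:
  "sos_supported k f \<Longrightarrow> sos_supported k g \<Longrightarrow> sos_supported k (f + g)"
  unfolding sos_supported_def by (metis add_0 fps_add_nth)

lemma sos_supported_of_int_mult: "sos_supported k f \<Longrightarrow> sos_supported k (of_int c * f)"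
  unfolding sos_supported_def fps_mult_of_int_nth by (metis mult_zero_right)

lemma sos_supported_mult:
  assumes "sos_supported k f" "sos_supported l g"
  shows "sos_supported (k + l) (f * g)"
  unfolding sos_supported_def
proof (intro allI impI)
  fix n assume "(f * g) $ n \<noteq> 0"
  then obtain i where "i \<in> {0..n}" "f $ i * g $ (n - i) \<noteq> 0"
    unfolding fps_mult_nth by (meson sum.not_neutral_contains_not_neutral)
  then have "i \<le> n" "f $ i \<noteq> 0" "g $ (n - i) \<noteq> 0"
    by auto
  then have "i \<le> n" "sum_of_squares k i" "sum_of_squares l (n - i)"
    using assms unfolding sos_supported_def by auto
  then show "sum_of_squares (k + l) n"
    using sum_of_squares_add by fastforce
qed

lemma nth_mult_inverse_1_minus_2:
  fixes B S :: "'a::field fps"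
  assumes "fps_integral B" "fps_integral S" "S $ 0 = 0"
  obtains r where "r \<in> \<int>"
    and "(B * inverse (1 - 2 * S)) $ n = B $ n + 2 * (S * B) $ n + 4 * (S * S * B) $ n + 8 * r"
proof
  define I where "I = inverse (1 - 2 * S)"
  have constant_term: "(1 - 2 * S) $ 0 = 1"
    using assms(3) by simp
  have I_integral: "fps_integral I"
    unfolding I_def using assms(2) constant_term
    by (intro fps_integral_inverse fps_integral_diff fps_integral_mult fps_integral_1 fps_integral_numeral)
  have I_inverse: "I * (1 - 2 * S) = 1"
    unfolding I_def by (rule inverse_mult_eq_1) (simp only: constant_term one_neq_zero not_False_eq_True)
  have "I = I * ((1 - 2 * S) * (1 + 2 * S + 4 * (S * S)) + 8 * (S * S * S))"
    by (simp add: algebra_simps)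
  also have "\<dots> = I * (1 - 2 * S) * (1 + 2 * S + 4 * (S * S)) + 8 * (S * S * S * I)"
    by (simp add: algebra_simps)
  also have "\<dots> = 1 + 2 * S + 4 * (S * S) + 8 * (S * S * S * I)"
    by (simp only: I_inverse mult_1_left)
  finally have "B * I = B * (1 + 2 * S + 4 * (S * S) + 8 * (S * S * S * I))"
    by (rule arg_cong)
  also have "\<dots> = B + 2 * (S * B) + 4 * (S * S * B) + 8 * (S * S * S * B * I)"
    by (simp add: algebra_simps)
  finally show "(B * inverse (1 - 2 * S)) $ n =
      B $ n + 2 * (S * B) $ n + 4 * (S * S * B) $ n + 8 * (S * S * S * B * I) $ n"
    unfolding I_def by (simp add: numeral_fps_const)
  have "fps_integral (S * S * S * B * I)"
    using assms(1,2) I_integral by (intro fps_integral_mult)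
  then show "(S * S * S * B * I) $ n \<in> \<int>"
    unfolding fps_integral_def ..
qed

section \<open>Elementary symmetric functions of the odd factors\<close>

definition first_odds :: "nat \<Rightarrow> nat set" where
  "first_odds K = {k. odd k \<and> k < 2 * K}"

lemma first_odds_Suc: "first_odds (Suc K) = insert (2 * K + 1) (first_odds K)"
  unfolding first_odds_def by auto presburger

lemma finite_first_odds [simp]: "finite (first_odds K)"
  by (simp add: first_odds_def)

lemma card_first_odds: "card (first_odds K) = K"
proof (induction K)
  case (Suc K)
  have "2 * K + 1 \<notin> first_odds K"
    by (simp add: first_odds_def)
  then show ?case
    using Suc by (simp add: first_odds_Suc)
qed (simp add: first_odds_def)

lemma first_odds_half: "first_odds ((n + 1) div 2) = {k. odd k \<and> k \<le> n}"
  unfolding first_odds_def by (intro Collect_cong) presburger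

lemma subsets_card_Suc_insert:
  assumes "finite A" "a \<notin> A"
  shows "{S. S \<subseteq> insert a A \<and> card S = Suc t} =
         {S. S \<subseteq> A \<and> card S = Suc t} \<union> insert a ` {S. S \<subseteq> A \<and> card S = t}"
proof (intro set_eqI iffI)
  fix S assume S: "S \<in> {S. S \<subseteq> insert a A \<and> card S = Suc t}"
  then have "finite S"
    using assms(1) finite_subset by auto
  show "S \<in> {S. S \<subseteq> A \<and> card S = Suc t} \<union> insert a ` {S. S \<subseteq> A \<and> card S = t}"
  proof (cases "a \<in> S")
    case True
    then have "S = insert a (S - {a})" "S - {a} \<subseteq> A" "card (S - {a}) = t"
      using S \<open>finite S\<close> by auto
    then show ?thesis
      by blast
  qed (use S in auto)
next
  fix S assume "S \<in> {S. S \<subseteq> A \<and> card S = Suc t} \<union> insert a ` {S. S \<subseteq> A \<and> card S = t}"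
  moreover have "card (insert a T) = Suc (card T)" if "T \<subseteq> A" for T
  proof -
    have "finite T" "a \<notin> T"
      using that assms finite_subset by auto
    then show ?thesis
      by simp
  qed
  ultimately show "S \<in> {S. S \<subseteq> insert a A \<and> card S = Suc t}"
    by auto
qed

lemma sum_prod_subsets_card_Suc_insert:
  fixes h :: "'a \<Rightarrow> 'b::comm_semiring_1"
  assumes "finite A" "a \<notin> A"
  shows "(\<Sum>S | S \<subseteq> insert a A \<and> card S = Suc t. \<Prod>k\<in>S. h k) =
         (\<Sum>S | S \<subseteq> A \<and> card S = Suc t. \<Prod>k\<in>S. h k) +
         h a * (\<Sum>S | S \<subseteq> A \<and> card S = t. \<Prod>k\<in>S. h k)"
proof -
  let ?Sub = "\<lambda>u. {S. S \<subseteq> A \<and> card S = u}"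
  have finite: "finite (?Sub u)" for u
    using assms(1) by auto
  have inj: "inj_on (insert a) (?Sub t)"
  proof (rule inj_onI)
    fix S T assume "S \<in> ?Sub t" "T \<in> ?Sub t" "insert a S = insert a T"
    moreover have "a \<notin> S" "a \<notin> T"
      using assms(2) \<open>S \<in> ?Sub t\<close> \<open>T \<in> ?Sub t\<close> by auto
    ultimately show "S = T"
      by (simp add: insert_ident)
  qed
  have "(\<Sum>S\<in>insert a ` ?Sub t. \<Prod>k\<in>S. h k) = (\<Sum>S\<in>?Sub t. \<Prod>k\<in>insert a S. h k)"
    using sum.reindex[OF inj] by simp
  also have "\<dots> = (\<Sum>S\<in>?Sub t. h a * (\<Prod>k\<in>S. h k))"
  proof (rule sum.cong[OF refl])
    fix S assume "S \<in> ?Sub t"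
    then have "finite S" "a \<notin> S"
      using assms finite_subset by auto
    then show "(\<Prod>k\<in>insert a S. h k) = h a * (\<Prod>k\<in>S. h k)"
      by simp
  qed
  finally have "(\<Sum>S\<in>insert a ` ?Sub t. \<Prod>k\<in>S. h k) = h a * (\<Sum>S\<in>?Sub t. \<Prod>k\<in>S. h k)"
    by (simp add: sum_distrib_left)
  moreover have "?Sub (Suc t) \<inter> insert a ` ?Sub t = {}"
    using assms(2) by auto
  ultimately show ?thesis
    unfolding subsets_card_Suc_insert[OF assms] by (simp add: sum.union_disjoint finite)
qed

definition odd_esym :: "nat \<Rightarrow> nat \<Rightarrow> rat fps" where
  "odd_esym K t = (\<Sum>S | S \<subseteq> first_odds K \<and> card S = t. \<Prod>k\<in>S. modd_factor (-2) k)"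

lemma modd_eq_nth_odd_esym: "modd (-2) t n = odd_esym ((n + 1) div 2) t $ n"
  unfolding modd_def odd_esym_def first_odds_half ..

lemma odd_esym_0_right [simp]: "odd_esym K 0 = 1"
proof -
  have "{S. S \<subseteq> first_odds K \<and> card S = 0} = {{}}"
  proof (intro set_eqI iffI)
    fix S assume "S \<in> {S. S \<subseteq> first_odds K \<and> card S = 0}"
    then have "finite S" "card S = 0"
      using finite_subset[OF _ finite_first_odds] by auto
    then show "S \<in> {{}}"
      by simp
  qed simp
  then show ?thesis
    unfolding odd_esym_def by simp
qed

lemma odd_esym_Suc_Suc:
  "odd_esym (Suc K) (Suc t) = odd_esym K (Suc t) + modd_factor (-2) (2 * K + 1) * odd_esym K t"
  unfolding odd_esym_def first_odds_Suc
  by (rule sum_prod_subsets_card_Suc_insert) (auto simp: first_odds_def)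

lemma odd_esym_eq_0: "K < t \<Longrightarrow> odd_esym K t = 0"
proof -
  assume "K < t"
  have "card S \<le> K" if "S \<subseteq> first_odds K" for S
    using card_mono[OF finite_first_odds that] by (simp add: card_first_odds)
  then have no_subsets: "{S. S \<subseteq> first_odds K \<and> card S = t} = {}"
    using \<open>K < t\<close> by (auto simp: not_le[symmetric])
  show ?thesis
    unfolding odd_esym_def no_subsets by simp
qed

lemma modd_factor_minus_2:
  assumes "0 < m"
  shows "(1 - fps_X ^ m) ^ 2 * modd_factor (-2) m = fps_X ^ m"
proof -
  have "fps_const (of_int (-2)) = (-2 :: rat fps)"
    by (simp add: numeral_fps_const fps_const_neg)
  then have square: "(1 - fps_X ^ m) ^ 2 = 1 + fps_const (of_int (-2)) * fps_X ^ m + (fps_X ^ (2 * m) :: rat fps)"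
    by (simp add: power2_eq_square power_mult algebra_simps)
  have "((1 - fps_X ^ m) ^ 2 :: rat fps) $ 0 = 1"
    using assms by (simp add: power2_eq_square)
  then show ?thesis
    unfolding modd_factor_def square[symmetric] by (simp add: mult.left_commute inverse_mult_eq_1')
qed

(* odd_denom K is D_K and odd_numer K t is W_K(t). *)
definition odd_denom :: "nat \<Rightarrow> rat fps" where
  "odd_denom K = (\<Prod>k\<in>first_odds K. (1 - fps_X ^ k) ^ 2)"

definition odd_numer :: "nat \<Rightarrow> nat \<Rightarrow> rat fps" where
  "odd_numer K t = odd_denom K * odd_esym K t"

lemma odd_denom_Suc: "odd_denom (Suc K) = (1 - fps_X ^ (2 * K + 1)) ^ 2 * odd_denom K"
proof -
  have "2 * K + 1 \<notin> first_odds K"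
    by (simp add: first_odds_def)
  then show ?thesis
    unfolding odd_denom_def first_odds_Suc by simp
qed

lemma odd_denom_nth_0: "odd_denom K $ 0 = 1"
  by (induction K) (simp_all add: odd_denom_Suc power2_eq_square, simp add: odd_denom_def first_odds_def)

lemma odd_numer_0_right: "odd_numer K 0 = odd_denom K"
  by (simp add: odd_numer_def)

lemma odd_numer_0_left: "odd_numer 0 t = (if t = 0 then 1 else 0)"
  by (simp add: odd_numer_def odd_denom_def first_odds_def odd_esym_eq_0)

lemma odd_numer_eq_0: "K < t \<Longrightarrow> odd_numer K t = 0"
  by (simp add: odd_numer_def odd_esym_eq_0)

lemma odd_numer_Suc_0: "odd_numer (Suc K) 0 = (1 - fps_X ^ (2 * K + 1)) ^ 2 * odd_numer K 0"
  by (simp add: odd_numer_0_right odd_denom_Suc)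

lemma odd_numer_Suc_Suc:
  "odd_numer (Suc K) (Suc t) =
     (1 - fps_X ^ (2 * K + 1)) ^ 2 * odd_numer K (Suc t) + fps_X ^ (2 * K + 1) * odd_numer K t"
proof -
  have "odd_numer (Suc K) (Suc t) = (1 - fps_X ^ (2 * K + 1)) ^ 2 * odd_numer K (Suc t)
      + ((1 - fps_X ^ (2 * K + 1)) ^ 2 * modd_factor (-2) (2 * K + 1)) * odd_numer K t"
    unfolding odd_numer_def odd_denom_Suc odd_esym_Suc_Suc by (simp add: algebra_simps)
  then show ?thesis
    by (simp only: modd_factor_minus_2[of "2 * K + 1"] zero_less_Suc add_Suc_right add_0_right)
qed

definition binomial_transform :: "nat \<Rightarrow> nat \<Rightarrow> rat fps" where
  "binomial_transform K j = (\<Sum>t\<le>K. of_nat ((2 * t) choose (t + j)) * odd_numer K t)"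

lemma sum_odd_numer_Suc:
  "(\<Sum>t\<le>Suc K. c t * odd_numer (Suc K) t) =
     (1 - fps_X ^ (2 * K + 1)) ^ 2 * (\<Sum>t\<le>K. c t * odd_numer K t)
     + fps_X ^ (2 * K + 1) * (\<Sum>t\<le>K. c (Suc t) * odd_numer K t)"
proof -
  let ?A = "(1 - fps_X ^ (2 * K + 1)) ^ 2 :: rat fps" and ?Y = "fps_X ^ (2 * K + 1) :: rat fps"
  have "(\<Sum>t\<le>Suc K. c t * odd_numer (Suc K) t)
      = c 0 * odd_numer (Suc K) 0 + (\<Sum>t\<le>K. c (Suc t) * odd_numer (Suc K) (Suc t))"
    by (rule sum.atMost_Suc_shift)
  also have "\<dots> = ?A * (c 0 * odd_numer K 0 + (\<Sum>t\<le>K. c (Suc t) * odd_numer K (Suc t)))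
      + ?Y * (\<Sum>t\<le>K. c (Suc t) * odd_numer K t)"
    unfolding odd_numer_Suc_0 odd_numer_Suc_Suc
    by (simp add: distrib_left sum.distrib sum_distrib_left mult.left_commute)
  also have "c 0 * odd_numer K 0 + (\<Sum>t\<le>K. c (Suc t) * odd_numer K (Suc t))
      = (\<Sum>t\<le>Suc K. c t * odd_numer K t)"
    by (rule sum.atMost_Suc_shift[symmetric])
  also have "\<dots> = (\<Sum>t\<le>K. c t * odd_numer K t)"
    by (simp add: odd_numer_eq_0)
  finally show ?thesis .
qed

lemma binomial_double_Suc_Suc:
  "(2 * Suc t) choose (Suc t + Suc j) =
     ((2 * t) choose (t + j)) + 2 * ((2 * t) choose (t + Suc j)) + ((2 * t) choose (t + Suc (Suc j)))"
  by (simp add: numeral_2_eq_2)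

lemma binomial_double_Suc_middle:
  "(2 * Suc t) choose Suc t = 2 * ((2 * t) choose t) + 2 * ((2 * t) choose Suc t)"
proof -
  have "(Suc (2 * t) choose t) = (Suc (2 * t) choose Suc t)"
    using binomial_symmetric[of t "Suc (2 * t)"] by (simp add: Suc_diff_le)
  then show ?thesis
    by (simp add: numeral_2_eq_2)
qed

lemma binomial_transform_Suc_Suc:
  "binomial_transform (Suc K) (Suc i) =
     (1 - fps_X ^ (2 * K + 1)) ^ 2 * binomial_transform K (Suc i)
     + fps_X ^ (2 * K + 1) * (binomial_transform K i + 2 * binomial_transform K (Suc i)
       + binomial_transform K (Suc (Suc i)))"
proof -
  have "(\<Sum>t\<le>K. of_nat ((2 * Suc t) choose (Suc t + Suc i)) * odd_numer K t)
      = binomial_transform K i + 2 * binomial_transform K (Suc i) + binomial_transform K (Suc (Suc i))"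
    unfolding binomial_transform_def binomial_double_Suc_Suc
    by (simp add: algebra_simps sum.distrib sum_distrib_left)
  then show ?thesis
    unfolding binomial_transform_def[of "Suc K"] sum_odd_numer_Suc by (simp add: binomial_transform_def)
qed

lemma binomial_transform_Suc_0:
  "binomial_transform (Suc K) 0 =
     (1 - fps_X ^ (2 * K + 1)) ^ 2 * binomial_transform K 0
     + fps_X ^ (2 * K + 1) * (2 * binomial_transform K 0 + 2 * binomial_transform K 1)"
proof -
  have "(\<Sum>t\<le>K. of_nat ((2 * Suc t) choose (Suc t + 0)) * odd_numer K t)
      = 2 * binomial_transform K 0 + 2 * binomial_transform K 1"
    unfolding binomial_transform_def using binomial_double_Suc_middle
    by (simp add: algebra_simps sum.distrib sum_distrib_left)
  then show ?thesis
    unfolding binomial_transform_def[of "Suc K"] sum_odd_numer_Suc by (simp add: binomial_transform_def)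
qed

lemma binomial_transform_0_left: "binomial_transform 0 j = (if j = 0 then 1 else 0)"
  by (simp add: binomial_transform_def odd_numer_0_left)

section \<open>A Gaussian binomial identity\<close>

definition qpoch :: "nat \<Rightarrow> rat fps" where
  "qpoch r = (\<Prod>i=1..r. 1 - fps_X ^ (2 * i))"

lemma qpoch_0 [simp]: "qpoch 0 = 1"
  by (simp add: qpoch_def)

lemma qpoch_Suc: "qpoch (Suc r) = qpoch r * (1 - fps_X ^ (2 * Suc r))"
  by (simp add: qpoch_def prod.nat_ivl_Suc' mult.commute)

lemma qpoch_Suc_Suc:
  "qpoch (Suc (Suc r)) = qpoch r * ((1 - fps_X ^ (2 * (r + 1))) * (1 - fps_X ^ (2 * (r + 2))))"
  by (simp add: qpoch_Suc mult.assoc)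

lemma qpoch_nth_0: "qpoch r $ 0 = 1"
  by (induction r) (simp_all add: qpoch_Suc)

lemma qpoch_nonzero: "qpoch r \<noteq> 0"
  using qpoch_nth_0[of r] by auto

definition gauss_term :: "nat \<Rightarrow> nat \<Rightarrow> rat fps" where
  "gauss_term K j = (if j \<le> K
     then fps_X ^ (j ^ 2) * qpoch (2 * K) * inverse (qpoch (K + j) * qpoch (K - j)) else 0)"

lemma gauss_term_mult_qpoch:
  assumes "j \<le> K"
  shows "gauss_term K j * (qpoch (K + j) * qpoch (K - j) * u) = qpoch (2 * K) * (fps_X ^ (j ^ 2) * u)"
proof -
  have "inverse (qpoch (K + j) * qpoch (K - j)) * (qpoch (K + j) * qpoch (K - j)) = 1"
    by (rule inverse_mult_eq_1) (simp add: qpoch_nth_0)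
  then show ?thesis
    using assms unfolding gauss_term_def by (simp add: algebra_simps)
qed

lemma gauss_term_eq_0: "K < j \<Longrightarrow> gauss_term K j = 0"
  by (simp add: gauss_term_def)

lemma gauss_term_diag: "gauss_term K K = fps_X ^ (K ^ 2)"
  using gauss_term_mult_qpoch[of K K 1] qpoch_nonzero[of "2 * K"] by (simp add: mult_2)

lemma gauss_term_mult_qpoch_Suc:
  assumes "j \<le> K"
  shows "gauss_term K j * (qpoch (Suc (K + j)) * qpoch (Suc (K - j))) =
    qpoch (2 * K) * (fps_X ^ (j ^ 2) * ((1 - fps_X ^ (2 * (K + j + 1))) * (1 - fps_X ^ (2 * (K - j + 1)))))"
proof -
  have "qpoch (Suc (K + j)) * qpoch (Suc (K - j)) =
      qpoch (K + j) * qpoch (K - j) * ((1 - fps_X ^ (2 * (K + j + 1))) * (1 - fps_X ^ (2 * (K - j + 1))))"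
    by (simp add: qpoch_Suc mult_ac)
  then show ?thesis
    by (simp only: gauss_term_mult_qpoch[OF assms])
qed

lemma gauss_term_mult_qpoch_Suc_Suc:
  assumes "j \<le> K"
  shows "gauss_term K j * (qpoch (Suc (Suc (K + j))) * qpoch (K - j)) =
    qpoch (2 * K) * (fps_X ^ (j ^ 2) * ((1 - fps_X ^ (2 * (K + j + 1))) * (1 - fps_X ^ (2 * (K + j + 2)))))"
proof -
  have "qpoch (Suc (Suc (K + j))) * qpoch (K - j) =
      qpoch (K + j) * qpoch (K - j) * ((1 - fps_X ^ (2 * (K + j + 1))) * (1 - fps_X ^ (2 * (K + j + 2))))"
    by (simp add: qpoch_Suc_Suc mult_ac)
  then show ?thesis
    by (simp only: gauss_term_mult_qpoch[OF assms])
qed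

lemma gauss_term_Suc_right_mult_qpoch_Suc:
  assumes "j \<le> K"
  shows "gauss_term K (Suc j) * (qpoch (Suc (K + j)) * qpoch (Suc (K - j))) =
    qpoch (2 * K) * (fps_X ^ (Suc j ^ 2) * ((1 - fps_X ^ (2 * (K - j))) * (1 - fps_X ^ (2 * (K - j + 1)))))"
proof (cases "Suc j \<le> K")
  case True
  then have "Suc (Suc (K - Suc j)) = Suc (K - j)" "K - Suc j + 1 = K - j" "K - Suc j + 2 = K - j + 1"
    by simp_all
  then have "qpoch (Suc (K - j)) =
      qpoch (K - Suc j) * ((1 - fps_X ^ (2 * (K - j))) * (1 - fps_X ^ (2 * (K - j + 1))))"
    using qpoch_Suc_Suc[of "K - Suc j"] by simp
  then have "qpoch (Suc (K + j)) * qpoch (Suc (K - j)) =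
      qpoch (K + Suc j) * qpoch (K - Suc j) * ((1 - fps_X ^ (2 * (K - j))) * (1 - fps_X ^ (2 * (K - j + 1))))"
    by (simp add: mult_ac)
  then show ?thesis
    by (simp only: gauss_term_mult_qpoch[OF True])
next
  case False
  then show ?thesis
    using assms by (simp add: gauss_term_eq_0)
qed

lemma gauss_term_Suc_left_mult_qpoch_Suc:
  assumes "j \<le> K"
  shows "gauss_term (Suc K) j * (qpoch (Suc (K + j)) * qpoch (Suc (K - j))) =
    qpoch (2 * K) * (fps_X ^ (j ^ 2) * ((1 - fps_X ^ (2 * (2 * K + 1))) * (1 - fps_X ^ (2 * (2 * K + 2)))))"
proof -
  have "gauss_term (Suc K) j * (qpoch (Suc K + j) * qpoch (Suc K - j) * 1)
      = qpoch (Suc (Suc (2 * K))) * (fps_X ^ (j ^ 2) * 1)"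
    using gauss_term_mult_qpoch[of j "Suc K" 1] assms by simp
  then show ?thesis
    using assms by (simp add: qpoch_Suc_Suc Suc_diff_le mult_ac)
qed

lemma gauss_recurrence_identity:
  fixes x :: "'a::idom"
  assumes "Suc i \<le> K"
  shows "x ^ (Suc i ^ 2) * ((1 - x ^ (2 * (2 * K + 1))) * (1 - x ^ (2 * (2 * K + 2)))) =
    (1 - x ^ (2 * K + 1)) ^ 2 *
      (x ^ (Suc i ^ 2) * ((1 - x ^ (2 * (K + Suc i + 1))) * (1 - x ^ (2 * (K - Suc i + 1)))))
    + x ^ (2 * K + 1) *
      (x ^ (i ^ 2) * ((1 - x ^ (2 * (K + i + 1))) * (1 - x ^ (2 * (K + i + 2))))
      + 2 * (x ^ (Suc i ^ 2) * ((1 - x ^ (2 * (K + Suc i + 1))) * (1 - x ^ (2 * (K - Suc i + 1)))))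
      + x ^ (Suc (Suc i) ^ 2) * ((1 - x ^ (2 * (K - Suc i))) * (1 - x ^ (2 * (K - Suc i + 1)))))"
proof -
  obtain d where K: "K = Suc i + d"
    using assms le_Suc_ex by blast
  then have differences: "K - Suc i + 1 = Suc d" "K - Suc i = d"
    by simp_all
  show ?thesis
    unfolding differences unfolding K power2_eq_square
    by (simp only: mult_Suc mult_Suc_right add_mult_distrib2 add_Suc add_Suc_right
        power_add power_Suc mult_2 add_0 add.assoc power_one_right) algebra
qed

lemma gauss_recurrence_identity_0:
  fixes x :: "'a::idom"
  shows "(1 - x ^ (2 * (2 * K + 1))) * (1 - x ^ (2 * (2 * K + 2))) =
    (1 - x ^ (2 * K + 1)) ^ 2 * (1 - x ^ (2 * (K + 1))) ^ 2
    + x ^ (2 * K + 1) * (2 * (1 - x ^ (2 * (K + 1))) ^ 2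
      + 2 * (x * ((1 - x ^ (2 * K)) * (1 - x ^ (2 * (K + 1))))))"
  by (simp only: mult_Suc mult_Suc_right add_mult_distrib2 add_Suc add_Suc_right
      power_add power_Suc mult_2 add_0 add.assoc power_one_right) algebra

lemma gauss_term_Suc_Suc:
  "gauss_term (Suc K) (Suc i) =
     (1 - fps_X ^ (2 * K + 1)) ^ 2 * gauss_term K (Suc i)
     + fps_X ^ (2 * K + 1) * (gauss_term K i + 2 * gauss_term K (Suc i) + gauss_term K (Suc (Suc i)))"
proof (cases "Suc i \<le> K")
  case True
  let ?A = "(1 - fps_X ^ (2 * K + 1)) ^ 2 :: rat fps" and ?Y = "fps_X ^ (2 * K + 1) :: rat fps"
    and ?g = "gauss_term K" and ?f = "\<lambda>e. 1 - fps_X ^ (2 * e) :: rat fps"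
  define M where "M = qpoch (Suc (Suc (K + i))) * qpoch (K - i)"
  have M: "M = qpoch (Suc (K + Suc i)) * qpoch (Suc (K - Suc i))"
    unfolding M_def using True by (simp add: Suc_diff_Suc)
  note top = gauss_term_Suc_left_mult_qpoch_Suc[OF True, folded M]
    and mid = gauss_term_mult_qpoch_Suc[OF True, folded M]
    and high = gauss_term_Suc_right_mult_qpoch_Suc[OF True, folded M]
    and low = gauss_term_mult_qpoch_Suc_Suc[OF Suc_leD[OF True], folded M_def]
  have "(?A * ?g (Suc i) + ?Y * (?g i + 2 * ?g (Suc i) + ?g (Suc (Suc i)))) * M
      = ?A * (?g (Suc i) * M) + ?Y * (?g i * M + 2 * (?g (Suc i) * M) + ?g (Suc (Suc i)) * M)"
    by (simp add: algebra_simps)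
  also have "\<dots> = qpoch (2 * K) *
      (?A * (fps_X ^ (Suc i ^ 2) * (?f (K + Suc i + 1) * ?f (K - Suc i + 1)))
      + ?Y * (fps_X ^ (i ^ 2) * (?f (K + i + 1) * ?f (K + i + 2))
        + 2 * (fps_X ^ (Suc i ^ 2) * (?f (K + Suc i + 1) * ?f (K - Suc i + 1)))
        + fps_X ^ (Suc (Suc i) ^ 2) * (?f (K - Suc i) * ?f (K - Suc i + 1))))"
    unfolding low mid high by (simp add: algebra_simps)
  also have "\<dots> = gauss_term (Suc K) (Suc i) * M"
    unfolding top gauss_recurrence_identity[OF True] ..
  finally show ?thesis
    using qpoch_nonzero unfolding M_def by (simp add: mult_right_cancel)
next
  case False
  then show ?thesis
  proof (cases "i = K")
    case True
    have "fps_X ^ (Suc K ^ 2) = (fps_X ^ (2 * K + 1) * fps_X ^ (K ^ 2) :: rat fps)"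
      by (simp add: power_add[symmetric] power2_eq_square)
    then show ?thesis
      using True by (simp add: gauss_term_diag gauss_term_eq_0)
  qed (simp add: gauss_term_eq_0)
qed

lemma gauss_term_Suc_0:
  "gauss_term (Suc K) 0 =
     (1 - fps_X ^ (2 * K + 1)) ^ 2 * gauss_term K 0
     + fps_X ^ (2 * K + 1) * (2 * gauss_term K 0 + 2 * gauss_term K 1)"
proof -
  let ?A = "(1 - fps_X ^ (2 * K + 1)) ^ 2 :: rat fps" and ?Y = "fps_X ^ (2 * K + 1) :: rat fps"
  define M where "M = qpoch (Suc K) * qpoch (Suc K)"
  note top = gauss_term_Suc_left_mult_qpoch_Suc[of 0 K, simplified, folded M_def]
    and zero = gauss_term_mult_qpoch_Suc[of 0 K, simplified, folded M_def]
    and one = gauss_term_Suc_right_mult_qpoch_Suc[of 0 K, simplified, folded M_def]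
  have "(?A * gauss_term K 0 + ?Y * (2 * gauss_term K 0 + 2 * gauss_term K 1)) * M
      = ?A * (gauss_term K 0 * M) + ?Y * (2 * (gauss_term K 0 * M) + 2 * (gauss_term K (Suc 0) * M))"
    by (simp add: algebra_simps)
  also have "\<dots> = qpoch (2 * K) * (?A * (1 - fps_X ^ (2 * (K + 1))) ^ 2
      + ?Y * (2 * (1 - fps_X ^ (2 * (K + 1))) ^ 2
        + 2 * (fps_X * ((1 - fps_X ^ (2 * K)) * (1 - fps_X ^ (2 * (K + 1)))))))"
    unfolding zero one by (simp add: algebra_simps power2_eq_square)
  also have "\<dots> = gauss_term (Suc K) 0 * M"
    unfolding top by (subst gauss_recurrence_identity_0[symmetric]) simp
  finally show ?thesis
    using qpoch_nonzero unfolding M_def by (simp add: mult_right_cancel)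
qed

lemma binomial_transform_eq_gauss_term: "binomial_transform K j = gauss_term K j"
proof (induction K arbitrary: j)
  case 0
  show ?case
    by (simp add: binomial_transform_0_left gauss_term_def)
next
  case (Suc K)
  show ?case
    by (cases j) (simp_all only: binomial_transform_Suc_0 gauss_term_Suc_0
        binomial_transform_Suc_Suc gauss_term_Suc_Suc Suc.IH)
qed

section \<open>Reduction modulo X^(n+1)\<close>

lemma qpoch_cong_qpoch: "L \<le> r \<Longrightarrow> fps_cong (2 * (L + 1)) (qpoch r) (qpoch L)"
proof (induction r rule: dec_induct)
  case (step r)
  have "fps_X ^ (2 * (L + 1)) dvd (fps_X ^ (2 * Suc r) :: rat fps)"
    by (rule le_imp_power_dvd) (use step(1) in simp)
  then have "fps_cong (2 * (L + 1)) (1 - fps_X ^ (2 * Suc r)) (1 :: rat fps)"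
    unfolding fps_cong_def by simp
  from fps_cong_mult[OF step(3) this] show ?case
    by (simp add: qpoch_Suc)
qed simp

lemma qpoch_cong: "L \<le> r \<Longrightarrow> L \<le> s \<Longrightarrow> fps_cong (2 * (L + 1)) (qpoch r) (qpoch s)"
  using qpoch_cong_qpoch fps_cong_sym fps_cong_trans by blast

lemma gauss_term_cong:
  assumes "K \<le> n" "n \<le> 2 * K"
  shows "fps_cong (n + 1) (gauss_term K j) (fps_X ^ (j ^ 2) * inverse (qpoch n))"
proof (cases "j \<le> K")
  case True
  let ?L = "2 * (K - j + 1)"
  \<comment> \<open>All the Pochhammer symbols involved agree modulo \<open>X ^ ?L\<close>, and the factor
    \<open>X ^ j\<^sup>2\<close> lifts the modulus past \<open>n\<close>.\<close>
  have "fps_cong ?L (qpoch (2 * K) * inverse (qpoch (K + j) * qpoch (K - j)))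
      (qpoch n * inverse (qpoch n * qpoch n))"
    using assms by (intro fps_cong_mult fps_cong_inverse qpoch_cong) (simp_all add: qpoch_nth_0)
  also have "qpoch n * inverse (qpoch n * qpoch n) = inverse (qpoch n)"
    using qpoch_nth_0[of n] by (simp add: fps_inverse_mult inverse_mult_eq_1' mult.assoc[symmetric])
  finally have "fps_cong (?L + j ^ 2)
      (fps_X ^ (j ^ 2) * (qpoch (2 * K) * inverse (qpoch (K + j) * qpoch (K - j))))
      (fps_X ^ (j ^ 2) * inverse (qpoch n))"
    by (rule fps_cong_mult_X_power)
  then have "fps_cong (?L + j ^ 2) (gauss_term K j) (fps_X ^ (j ^ 2) * inverse (qpoch n))"
    using True by (simp add: gauss_term_def mult.assoc)
  moreover have "n + 1 \<le> ?L + j ^ 2"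
  proof -
    have "2 * j \<le> j ^ 2 + 1"
      by (cases j) (simp_all add: power2_eq_square)
    moreover obtain d where "K = j + d"
      using True le_iff_add by blast
    ultimately show ?thesis
      using assms(2) by simp
  qed
  ultimately show ?thesis
    by (rule fps_cong_mono)
next
  case False
  then have "(K + 1) ^ 2 \<le> j ^ 2"
    by (intro power_mono) simp_all
  then have "n + 1 \<le> j ^ 2"
    using assms(2) by (simp add: power2_eq_square)
  then show ?thesis
    using False by (simp add: gauss_term_eq_0 fps_cong_0_X_power)
qed

definition theta_quotient :: "nat \<Rightarrow> rat fps \<Rightarrow> bool" where
  "theta_quotient n F \<longleftrightarrow>
     (\<exists>B. fps_integral B \<and> sos_supported 1 B \<and> fps_cong (n + 1) F (B * inverse (qpoch n)))"

lemma theta_quotient_0: "theta_quotient n 0"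
  unfolding theta_quotient_def by (rule exI[of _ 0]) (simp add: fps_integral_def sos_supported_def)

lemma theta_quotient_gauss_term:
  "K \<le> n \<Longrightarrow> n \<le> 2 * K \<Longrightarrow> theta_quotient n (gauss_term K j)"
  unfolding theta_quotient_def
  by (blast intro: gauss_term_cong fps_integral_X_power sos_supported_X_power_square)

lemma theta_quotient_add:
  assumes "theta_quotient n F" "theta_quotient n G"
  shows "theta_quotient n (F + G)"
proof -
  obtain B C where "fps_integral B" "sos_supported 1 B" "fps_cong (n + 1) F (B * inverse (qpoch n))"
    and "fps_integral C" "sos_supported 1 C" "fps_cong (n + 1) G (C * inverse (qpoch n))"
    using assms unfolding theta_quotient_def by blast
  then show ?thesis
    unfolding theta_quotient_def
    by (intro exI[of _ "B + C"])
      (auto intro: fps_integral_add sos_supported_add dest: fps_cong_add simp: distrib_right)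
qed

lemma theta_quotient_of_int_mult:
  assumes "theta_quotient n F"
  shows "theta_quotient n (of_int c * F)"
proof -
  obtain B where "fps_integral B" "sos_supported 1 B" "fps_cong (n + 1) F (B * inverse (qpoch n))"
    using assms unfolding theta_quotient_def by blast
  then show ?thesis
    unfolding theta_quotient_def
    by (intro exI[of _ "of_int c * B"])
      (auto intro: fps_integral_of_int_mult sos_supported_of_int_mult
        dest: fps_cong_mult[OF fps_cong_refl] simp: mult.assoc)
qed

lemma theta_quotient_diff:
  assumes "theta_quotient n F" "theta_quotient n G"
  shows "theta_quotient n (F - G)"
proof -
  have "theta_quotient n (F + of_int (-1) * G)"
    using assms by (intro theta_quotient_add theta_quotient_of_int_mult)
  then show ?thesis
    by simp
qed

lemma theta_quotient_sum:
  "finite A \<Longrightarrow> (\<And>s. s \<in> A \<Longrightarrow> theta_quotient n (f s)) \<Longrightarrow>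
    theta_quotient n (\<Sum>s\<in>A. f s)"
  by (induction A rule: finite_induct) (simp_all add: theta_quotient_0 theta_quotient_add)

lemma binomial_transform_split:
  assumes "t \<le> K"
  shows "binomial_transform K t =
    odd_numer K t + (\<Sum>s\<in>{t<..K}. of_nat ((2 * s) choose (s + t)) * odd_numer K s)"
proof -
  let ?g = "\<lambda>s. of_nat ((2 * s) choose (s + t)) * odd_numer K s"
  have split: "{..K} = {..<t} \<union> insert t {t<..K}"
    using assms by auto
  have "binomial_transform K t = (\<Sum>s<t. ?g s) + (\<Sum>s\<in>insert t {t<..K}. ?g s)"
    unfolding binomial_transform_def split by (rule sum.union_disjoint) auto
  also have "(\<Sum>s<t. ?g s) = 0"
    by (intro sum.neutral) (auto simp: binomial_eq_0)
  finally show ?thesis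
    by (simp add: mult_2)
qed

lemma theta_quotient_odd_numer:
  assumes "K \<le> n" "n \<le> 2 * K"
  shows "theta_quotient n (odd_numer K t)"
proof (induction "K - t" arbitrary: t rule: less_induct)
  case less
  show ?case
  proof (cases "t \<le> K")
    case True
    have "theta_quotient n (of_int (int ((2 * s) choose (s + t))) * odd_numer K s)" if "s \<in> {t<..K}" for s
      using that by (intro theta_quotient_of_int_mult less) auto
    then have "theta_quotient n
        (binomial_transform K t - (\<Sum>s\<in>{t<..K}. of_nat ((2 * s) choose (s + t)) * odd_numer K s))"
      using assms unfolding binomial_transform_eq_gauss_term
      by (intro theta_quotient_diff theta_quotient_gauss_term theta_quotient_sum) simp_all
    then show ?thesis
      using binomial_transform_split[OF True] by simp
  qed (simp add: odd_numer_eq_0 theta_quotient_0)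
qed

lemma even_central_binomial: "0 < s \<Longrightarrow> even ((2 * s) choose s)"
  using binomial_double_Suc_middle[of "s - 1"] by simp

lemma odd_denom_cong:
  assumes "K \<le> n" "n \<le> 2 * K"
  obtains S where "fps_integral S" "sos_supported 1 S"
    and "fps_cong (n + 1) (odd_denom K) ((1 - 2 * S) * inverse (qpoch n))"
proof -
  define F where "F = (\<Sum>s\<in>{0<..K}. of_int (int (((2 * s) choose s) div 2)) * odd_numer K s)"
  have "(\<Sum>s\<in>{0<..K}. of_nat ((2 * s) choose (s + 0)) * odd_numer K s) = 2 * F"
    unfolding F_def sum_distrib_left
  proof (rule sum.cong[OF refl])
    fix s :: nat assume "s \<in> {0<..K}"
    then have "(2 * s) choose s = 2 * (((2 * s) choose s) div 2)"
      using even_central_binomial by simp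
    then have "(of_nat ((2 * s) choose s) :: rat fps) = 2 * of_int (int (((2 * s) choose s) div 2))"
      by (metis of_int_of_nat_eq of_nat_mult of_nat_numeral)
    then show "of_nat ((2 * s) choose (s + 0)) * odd_numer K s
        = 2 * (of_int (int (((2 * s) choose s) div 2)) * odd_numer K s)"
      by simp
  qed
  then have denom: "odd_denom K = binomial_transform K 0 - 2 * F"
    using binomial_transform_split[of 0 K] by (simp add: odd_numer_0_right)
  have "theta_quotient n F"
    unfolding F_def by (intro theta_quotient_sum theta_quotient_of_int_mult theta_quotient_odd_numer assms) simp
  then obtain B where B: "fps_integral B" "sos_supported 1 B"
    and F_cong: "fps_cong (n + 1) F (B * inverse (qpoch n))"
    unfolding theta_quotient_def by blast
  have "fps_cong (n + 1) (binomial_transform K 0) (inverse (qpoch n))"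
    using gauss_term_cong[OF assms, of 0] by (simp add: binomial_transform_eq_gauss_term)
  then have "fps_cong (n + 1) (binomial_transform K 0 - 2 * F) (inverse (qpoch n) - 2 * (B * inverse (qpoch n)))"
    using F_cong by (intro fps_cong_diff fps_cong_mult[OF fps_cong_refl])
  then have "fps_cong (n + 1) (odd_denom K) ((1 - 2 * B) * inverse (qpoch n))"
    unfolding denom by (simp add: algebra_simps)
  then show ?thesis
    using that B by blast
qed

lemma odd_esym_cong:
  assumes "K \<le> n" "n \<le> 2 * K"
  obtains B S where "fps_integral B" "sos_supported 1 B" "fps_integral S" "sos_supported 1 S"
    and "S $ 0 = 0" and "fps_cong (n + 1) (odd_esym K t) (B * inverse (1 - 2 * S))"
proof -
  define H where "H = inverse (qpoch n)"
  obtain S where S: "fps_integral S" "sos_supported 1 S"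
    and denom_cong: "fps_cong (n + 1) (odd_denom K) ((1 - 2 * S) * H)"
    using odd_denom_cong[OF assms] unfolding H_def by blast
  obtain B where B: "fps_integral B" "sos_supported 1 B"
    and numer_cong: "fps_cong (n + 1) (odd_numer K t) (B * H)"
    using theta_quotient_odd_numer[OF assms] unfolding theta_quotient_def H_def by blast
  have H_0: "H $ 0 = 1"
    unfolding H_def by (simp add: qpoch_nth_0)
  have "odd_denom K $ 0 = ((1 - 2 * S) * H) $ 0"
    using denom_cong by (rule fps_cong_nth) simp
  then have S_0: "S $ 0 = 0"
    using H_0 by (simp add: odd_denom_nth_0)
  have unit: "((1 - 2 * S) * H) $ 0 \<noteq> 0"
    using H_0 S_0 by simp
  have inverse: "(1 - 2 * S) * inverse (1 - 2 * S) = 1"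
    using S_0 by (intro inverse_mult_eq_1') simp
  have "fps_cong (n + 1) (((1 - 2 * S) * H) * odd_esym K t) (odd_numer K t)"
    unfolding odd_numer_def using fps_cong_sym[OF denom_cong] by (rule fps_cong_mult) simp
  also have "fps_cong (n + 1) (odd_numer K t) (B * H)"
    by (rule numer_cong)
  also have "B * H = B * H * ((1 - 2 * S) * inverse (1 - 2 * S))"
    unfolding inverse by simp
  also have "\<dots> = ((1 - 2 * S) * H) * (B * inverse (1 - 2 * S))"
    by algebra
  finally show ?thesis
    using that B S S_0 fps_cong_mult_cancel unit by blast
qed

lemma modd_decomposition:
  obtains a b c r :: rat where "modd (-2) t n = a + 2 * b + 4 * c + 8 * r" and "c \<in> \<int>" "r \<in> \<int>"
    and "a \<noteq> 0 \<Longrightarrow> sum_of_squares 1 n" "b \<noteq> 0 \<Longrightarrow> sum_of_squares 2 n"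
    and "c \<noteq> 0 \<Longrightarrow> sum_of_squares 3 n"
proof -
  define K where "K = (n + 1) div 2"
  have "K \<le> n" "n \<le> 2 * K"
    unfolding K_def by presburger+
  then obtain B S where B: "fps_integral B" "sos_supported 1 B" and S: "fps_integral S" "sos_supported 1 S"
    and "S $ 0 = 0" and esym_cong: "fps_cong (n + 1) (odd_esym K t) (B * inverse (1 - 2 * S))"
    by (rule odd_esym_cong)
  obtain r where "r \<in> \<int>"
    and "(B * inverse (1 - 2 * S)) $ n = B $ n + 2 * (S * B) $ n + 4 * (S * S * B) $ n + 8 * r"
    using nth_mult_inverse_1_minus_2[OF B(1) S(1) \<open>S $ 0 = 0\<close>] by blast
  moreover have "modd (-2) t n = (B * inverse (1 - 2 * S)) $ n"
    unfolding modd_eq_nth_odd_esym K_def[symmetric] using esym_cong by (rule fps_cong_nth) simp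
  moreover have "sos_supported 2 (S * B)" "sos_supported 3 (S * S * B)"
    using sos_supported_mult[OF S(2) B(2)] sos_supported_mult[OF sos_supported_mult[OF S(2) S(2)] B(2)]
    by (simp_all add: numeral_2_eq_2 numeral_3_eq_3)
  moreover have "fps_integral (S * S * B)"
    using B(1) S(1) by (intro fps_integral_mult)
  then have "(S * S * B) $ n \<in> \<int>"
    unfolding fps_integral_def ..
  ultimately show ?thesis
    using that B(2) unfolding sos_supported_def by metis
qed

lemma modd_div_4_in_Ints:
  assumes "\<not> sum_of_squares 2 n"
  shows "modd (-2) t n / 4 \<in> \<int>"
proof -
  obtain a b c r :: rat where decomposition: "modd (-2) t n = a + 2 * b + 4 * c + 8 * r"
    and "c \<in> \<int>" "r \<in> \<int>" and a: "a \<noteq> 0 \<Longrightarrow> sum_of_squares 1 n" and b: "b \<noteq> 0 \<Longrightarrow> sum_of_squares 2 n"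
    by (rule modd_decomposition[of t n]) blast
  have "a = 0" "b = 0"
    using a b assms sum_of_squares_mono[of 1 n 2] by auto
  then have "modd (-2) t n / 4 = c + 2 * r"
    unfolding decomposition by simp
  moreover have "c + 2 * r \<in> \<int>"
    using \<open>c \<in> \<int>\<close> \<open>r \<in> \<int>\<close> by (intro Ints_add Ints_mult) simp_all
  ultimately show ?thesis
    by (simp only:)
qed

lemma modd_div_8_in_Ints:
  assumes "\<not> sum_of_squares 3 n"
  shows "modd (-2) t n / 8 \<in> \<int>"
proof -
  obtain a b c r :: rat where decomposition: "modd (-2) t n = a + 2 * b + 4 * c + 8 * r"
    and "r \<in> \<int>" and a: "a \<noteq> 0 \<Longrightarrow> sum_of_squares 1 n" and b: "b \<noteq> 0 \<Longrightarrow> sum_of_squares 2 n"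
    and c: "c \<noteq> 0 \<Longrightarrow> sum_of_squares 3 n"
    by (rule modd_decomposition[of t n]) blast
  have "a = 0" "b = 0" "c = 0"
    using a b c assms sum_of_squares_mono[of 1 n 3] sum_of_squares_mono[of 2 n 3] by auto
  then have "modd (-2) t n / 8 = r"
    unfolding decomposition by simp
  then show ?thesis
    using \<open>r \<in> \<int>\<close> by simp
qed

theorem mainTheorem12:
  fixes t N :: nat
  assumes "t \<ge> 1"
  shows "(\<forall>r\<in>{3, 6}. modd (-2) t (8 * N + r) / 4 \<in> \<int>)
       \<and> (\<forall>r\<in>{3, 6}. modd (-2) t (9 * N + r) / 4 \<in> \<int>)
       \<and> modd (-2) t (8 * N + 7) / 8 \<in> \<int>"
proof (intro conjI ballI)
  fix r :: nat assume "r \<in> {3, 6}"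
  then show "modd (-2) t (8 * N + r) / 4 \<in> \<int>" "modd (-2) t (9 * N + r) / 4 \<in> \<int>"
    using sum_of_two_squares_mod_8[of "8 * N + r"] sum_of_two_squares_mod_9[of "9 * N + r"]
    by (auto intro: modd_div_4_in_Ints)
next
  show "modd (-2) t (8 * N + 7) / 8 \<in> \<int>"
    using sum_of_three_squares_mod_8[of "8 * N + 7"] by (auto intro: modd_div_8_in_Ints)
qed

end
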